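(* Let $G$ be a discriminating group and let $\mathcal{S}$ be a $T$-subgroup of $F$ which consists of weak* identities in $G$ modulo the trivial $T$-subgroup $\{1\}$. Then every element of $\mathcal{S}$ is an identity in $G$, i.e. $\pi(s)=1$ for all $s\in\mathcal{S}$ and all homomorphisms $\pi:F\to G$.
   Context: A group $G$ is discriminating if for every integer $N$ and every $h_1,\dots,h_N\in G\times G$ there is a homomorphism $\rho:G\times G\to G$ with $\rho(h_i)=1$ if and only if $h_i=1$, for each $i$. Let $F$ be the free group on countably many generators $g_1,g_2,\dots$. For $N\ge 1$, $F^{\times N}$ is the direct product of $N$ copies of $F$, $i_k:F\to F^{\times N}$ the $k$-th inclusion. A subset $S\subset F$ is a set of weak identities in a group $G$ if there exists $N\ge1$ such that for any $s_1,\dots,s_N\in S$ and any homomorphism $\rho:F^{\times N}\to G$ some $k$ has $\rho(i_k(s_k))=1$. A $T$-subgroup of $F$ is a subgroup preserved by all endomorphisms of $F$. For a $T$-subgroup $\mathcal{H}$, $\mathcal{H}(G)=\{\pi(h):h\in\mathcal{H},\ \pi:F\to G\text{ a homomorphism}\}$. $S$ consists of weak identities modulo $\mathcal{H}$ in $G$ if $S$ is a set of weak identities in $G/\mathcal{H}(G)$. A $T$-subgroup $\mathcal{S}$ consists of weak* identities in $G$ modulo a $T$-subgroup $\mathcal{H}$ if there exist $m\ge0$ and $T$-subgroups $\mathcal{S}_0=\mathcal{S},\dots,\mathcal{S}_m=\mathcal{H}$ such that $\mathcal{S}_{j-1}$ consists of weak identities modulo $\mathcal{S}_j$ in $G$ for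 all $j=1,\dots,m$. *)

theory Defs
  imports "HOL-Algebra.Algebra"
begin

text \<open>Letters are pairs (i, b): generator number i, b = True meaning the inverse.
  Elements of F are reduced words.\<close>

type_synonym fword = "(nat \<times> bool) list"

fun fw_push :: "nat \<times> bool \<Rightarrow> fword \<Rightarrow> fword" where
  "fw_push x [] = [x]"
| "fw_push x (y # ys) = (if fst x = fst y \<and> snd x \<noteq> snd y then ys else x # y # ys)"

definition fw_reduce :: "fword \<Rightarrow> fword" where
  "fw_reduce w = foldr fw_push w []"

fun fw_reduced :: "fword \<Rightarrow> bool" where
  "fw_reduced [] = True"
| "fw_reduced [x] = True"
| "fw_reduced (x # y # ys) = (\<not> (fst x = fst y \<and> snd x \<noteq> snd y) \<and> fw_reduced (y # ys))"

definition free_group_F :: "fword monoid" where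
  "free_group_F = \<lparr>carrier = {w. fw_reduced w}, monoid.mult = (\<lambda>u v. fw_reduce (u @ v)), one = []\<rparr>"

definition fgen :: "nat \<Rightarrow> fword" where
  "fgen k = [(k, False)]"

definition discriminating :: "('a, 'b) monoid_scheme \<Rightarrow> bool" where
  "discriminating G \<longleftrightarrow>
     (\<forall>hs :: ('a \<times> 'a) list. set hs \<subseteq> carrier (G \<times>\<times> G) \<longrightarrow>
        (\<exists>\<rho> \<in> hom (G \<times>\<times> G) G. \<forall>h \<in> set hs. \<rho> h = \<one>\<^bsub>G\<^esub> \<longleftrightarrow> h = \<one>\<^bsub>G \<times>\<times> G\<^esub>))"

definition F_power :: "nat \<Rightarrow> (nat \<Rightarrow> fword) monoid" where
  "F_power N = product_group {..<N} (\<lambda>_. free_group_F)"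

definition F_incl :: "nat \<Rightarrow> nat \<Rightarrow> fword \<Rightarrow> (nat \<Rightarrow> fword)" where
  "F_incl N k x = (\<lambda>i \<in> {..<N}. if i = k then x else \<one>\<^bsub>free_group_F\<^esub>)"

definition weak_identities :: "fword set \<Rightarrow> ('a, 'b) monoid_scheme \<Rightarrow> bool" where
  "weak_identities S G \<longleftrightarrow>
     (\<exists>N \<ge> 1. \<forall>s \<in> {..<N} \<rightarrow> S. \<forall>\<rho> \<in> hom (F_power N) G.
        \<exists>k < N. \<rho> (F_incl N k (s k)) = \<one>\<^bsub>G\<^esub>)"

definition T_subgroup :: "fword set \<Rightarrow> bool" where
  "T_subgroup H \<longleftrightarrow> subgroup H free_group_F \<and>
     (\<forall>\<phi> \<in> hom free_group_F free_group_F. \<phi> ` H \<subseteq> H)"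

definition verbal :: "fword set \<Rightarrow> ('a, 'b) monoid_scheme \<Rightarrow> 'a set" where
  "verbal H G = {\<pi> h | h \<pi>. h \<in> H \<and> \<pi> \<in> hom free_group_F G}"

definition weak_identities_mod :: "fword set \<Rightarrow> fword set \<Rightarrow> ('a, 'b) monoid_scheme \<Rightarrow> bool" where
  "weak_identities_mod S H G \<longleftrightarrow> weak_identities S (G Mod verbal H G)"

definition weak_star_identities_mod :: "fword set \<Rightarrow> fword set \<Rightarrow> ('a, 'b) monoid_scheme \<Rightarrow> bool" where
  "weak_star_identities_mod S H G \<longleftrightarrow>
     (\<exists>m :: nat. \<exists>Ss :: nat \<Rightarrow> fword set.
        (\<forall>j \<le> m. T_subgroup (Ss j)) \<and> Ss 0 = S \<and> Ss m = H \<and>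
        (\<forall>j \<in> {1..m}. weak_identities_mod (Ss (j - 1)) (Ss j) G))"

end

theory Submission
  imports Defs
begin

text \<open>If a homomorphism \<open>\<pi> : F \<rightarrow> G\<close> has \<open>\<pi> s \<noteq> 1\<close>, then each composite of \<open>\<pi>\<close> with a coordinate projection
  \<open>F\<^sup>N \<rightarrow> F\<close> is a homomorphism \<open>F\<^sup>N \<rightarrow> G\<close> not killing the corresponding \<open>i\<^sub>k(s)\<close>.
  In a discriminating group finitely many such homomorphisms can be merged into a single
  one, by pairing two of them into \<open>G \<times> G\<close> and following with a discriminating
  \<open>\<rho> : G \<times> G \<rightarrow> G\<close>. The merged homomorphism kills none of the \<open>i\<^sub>k(s)\<close>, so \<open>s\<close> is not
  a weak identity: in a discriminating group weak identities are identities.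
  Modulo a set of identities the verbal subgroup is trivial and \<open>G/{1} \<cong> G\<close>, so going
  down the chain of T-subgroups every member consists of identities.\<close>

definition identities :: "fword set \<Rightarrow> ('a, 'b) monoid_scheme \<Rightarrow> bool" where
  "identities S G \<longleftrightarrow> (\<forall>s \<in> S. \<forall>\<pi> \<in> hom free_group_F G. \<pi> s = \<one>\<^bsub>G\<^esub>)"

lemma const_one_hom: "monoid G \<Longrightarrow> (\<lambda>_. \<one>\<^bsub>G\<^esub>) \<in> hom A G"
  by (rule homI) simp_all

lemma hom_idempotent_eq_one:
  assumes "group H" "h \<in> hom G H" "e \<in> carrier G" "e \<otimes>\<^bsub>G\<^esub> e = e"
  shows "h e = \<one>\<^bsub>H\<^esub>"
proof -
  have "h e \<otimes>\<^bsub>H\<^esub> h e = h e"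
    using hom_mult[OF assms(2,3,3)] assms(4) by simp
  then show ?thesis
    using hom_in_carrier[OF assms(2,3)] assms(1) by (metis group.r_cancel_one)
qed

lemma hom_product_group_proj:
  assumes "k \<in> I" shows "(\<lambda>x. x k) \<in> hom (product_group I G) (G k)"
  using assms by (intro homI) (auto simp: PiE_iff)

lemma discriminating_merge_two_homs:
  assumes "discriminating G" "\<theta> \<in> hom A G" "\<pi> \<in> hom A G"
    and "finite U" "U \<subseteq> carrier A"
    and nontriv: "\<And>x. x \<in> U \<Longrightarrow> \<theta> x \<noteq> \<one>\<^bsub>G\<^esub> \<or> \<pi> x \<noteq> \<one>\<^bsub>G\<^esub>"
  shows "\<exists>\<psi> \<in> hom A G. \<forall>x \<in> U. \<psi> x \<noteq> \<one>\<^bsub>G\<^esub>"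
proof -
  have pair: "(\<lambda>x. (\<theta> x, \<pi> x)) \<in> hom A (G \<times>\<times> G)"
    using assms(2,3) by (simp add: hom_paired)
  obtain xs where xs: "set xs = U" using \<open>finite U\<close> finite_list by blast
  let ?hs = "map (\<lambda>x. (\<theta> x, \<pi> x)) xs"
  have "set ?hs \<subseteq> carrier (G \<times>\<times> G)"
    using hom_in_carrier[OF pair] xs \<open>U \<subseteq> carrier A\<close> by auto
  then obtain \<rho> where \<rho>: "\<rho> \<in> hom (G \<times>\<times> G) G"
    and discr: "\<forall>h \<in> set ?hs. \<rho> h = \<one>\<^bsub>G\<^esub> \<longleftrightarrow> h = \<one>\<^bsub>G \<times>\<times> G\<^esub>"
    using assms(1) unfolding discriminating_def by blast
  have "\<rho> \<circ> (\<lambda>x. (\<theta> x, \<pi> x)) \<in> hom A G"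
    using hom_compose[OF pair \<rho>] .
  moreover have "\<forall>x \<in> U. (\<rho> \<circ> (\<lambda>x. (\<theta> x, \<pi> x))) x \<noteq> \<one>\<^bsub>G\<^esub>"
    using discr nontriv xs by simp
  ultimately show ?thesis by blast
qed

lemma discriminating_merge_homs:
  assumes "group G" "discriminating G" "finite U" "U \<subseteq> carrier A"
    and "\<And>x. x \<in> U \<Longrightarrow> \<exists>\<pi> \<in> hom A G. \<pi> x \<noteq> \<one>\<^bsub>G\<^esub>"
  shows "\<exists>\<psi> \<in> hom A G. \<forall>x \<in> U. \<psi> x \<noteq> \<one>\<^bsub>G\<^esub>"
  using assms(3-)
proof (induction U rule: finite_induct)
  case empty
  show ?case using const_one_hom[OF group.is_monoid[OF \<open>group G\<close>]] by blast
next
  case (insert x U)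
  obtain \<psi> where \<psi>: "\<psi> \<in> hom A G" "\<forall>y \<in> U. \<psi> y \<noteq> \<one>\<^bsub>G\<^esub>"
    using insert by blast
  obtain \<pi> where \<pi>: "\<pi> \<in> hom A G" "\<pi> x \<noteq> \<one>\<^bsub>G\<^esub>"
    using insert.prems(2) by blast
  show ?case
    by (rule discriminating_merge_two_homs[OF \<open>discriminating G\<close> \<psi>(1) \<pi>(1)])
      (use insert.hyps(1) insert.prems(1) \<psi>(2) \<pi>(2) in auto)
qed

lemma F_incl_in_carrier:
  "x \<in> carrier free_group_F \<Longrightarrow> F_incl N k x \<in> carrier (F_power N)"
  by (auto simp: F_incl_def F_power_def free_group_F_def)

lemma weak_identities_imp_identities:
  assumes "group G" "discriminating G" "S \<subseteq> carrier free_group_F" "weak_identities S G"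
  shows "identities S G"
  unfolding identities_def
proof (intro ballI, rule ccontr)
  fix s \<pi> assume "s \<in> S" "\<pi> \<in> hom free_group_F G" "\<pi> s \<noteq> \<one>\<^bsub>G\<^esub>"
  obtain N where weak: "\<forall>s \<in> {..<N} \<rightarrow> S. \<forall>\<rho> \<in> hom (F_power N) G.
      \<exists>k < N. \<rho> (F_incl N k (s k)) = \<one>\<^bsub>G\<^esub>"
    using assms(4) unfolding weak_identities_def by blast
  have "(\<lambda>k. F_incl N k s) ` {..<N} \<subseteq> carrier (F_power N)"
    using F_incl_in_carrier \<open>s \<in> S\<close> assms(3) by blast
  moreover have "\<exists>\<pi>' \<in> hom (F_power N) G. \<pi>' x \<noteq> \<one>\<^bsub>G\<^esub>"
    if x: "x \<in> (\<lambda>k. F_incl N k s) ` {..<N}" for x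
  proof -
    obtain k where k: "k < N" "x = F_incl N k s" using x by blast
    have "(\<lambda>y. y k) \<in> hom (F_power N) free_group_F"
      using hom_product_group_proj[of k "{..<N}" "\<lambda>_. free_group_F"] k
      unfolding F_power_def by simp
    then have "\<pi> \<circ> (\<lambda>y. y k) \<in> hom (F_power N) G"
      using hom_compose \<open>\<pi> \<in> hom free_group_F G\<close> by blast
    moreover have "(\<pi> \<circ> (\<lambda>y. y k)) x \<noteq> \<one>\<^bsub>G\<^esub>"
      using k \<open>\<pi> s \<noteq> \<one>\<^bsub>G\<^esub>\<close> by (simp add: F_incl_def)
    ultimately show ?thesis by blast
  qed
  ultimately have "\<exists>\<psi> \<in> hom (F_power N) G.
      \<forall>x \<in> (\<lambda>k. F_incl N k s) ` {..<N}. \<psi> x \<noteq> \<one>\<^bsub>G\<^esub>"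
    by (rule discriminating_merge_homs[OF assms(1,2) finite_imageI[OF finite_lessThan]])
  then obtain \<psi> where \<psi>: "\<psi> \<in> hom (F_power N) G"
    and nontriv: "\<forall>k < N. \<psi> (F_incl N k s) \<noteq> \<one>\<^bsub>G\<^esub>"
    by auto
  have "(\<lambda>_. s) \<in> {..<N} \<rightarrow> S" using \<open>s \<in> S\<close> by simp
  from weak[rule_format, OF this \<psi>] obtain k where "k < N" "\<psi> (F_incl N k s) = \<one>\<^bsub>G\<^esub>"
    by blast
  then show False using nontriv by blast
qed

lemma verbal_identities:
  assumes "group G" "H \<noteq> {}" "identities H G"
  shows "verbal H G = {\<one>\<^bsub>G\<^esub>}"
proof -
  obtain h where "h \<in> H" using assms(2) by blast
  then have "\<one>\<^bsub>G\<^esub> \<in> verbal H G"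
    using const_one_hom[OF group.is_monoid[OF assms(1)], of free_group_F]
    unfolding verbal_def by (intro CollectI exI[of _ h] exI[of _ "\<lambda>_. \<one>\<^bsub>G\<^esub>"]) simp
  then show ?thesis using assms(3) unfolding verbal_def identities_def by blast
qed

lemma weak_identities_reflect:
  assumes "f \<in> hom G H" "\<And>x. x \<in> carrier G \<Longrightarrow> f x = \<one>\<^bsub>H\<^esub> \<Longrightarrow> x = \<one>\<^bsub>G\<^esub>"
    and "S \<subseteq> carrier free_group_F" "weak_identities S H"
  shows "weak_identities S G"
proof -
  obtain N where "N \<ge> 1" and weak: "\<forall>s \<in> {..<N} \<rightarrow> S. \<forall>\<rho> \<in> hom (F_power N) H.
      \<exists>k < N. \<rho> (F_incl N k (s k)) = \<one>\<^bsub>H\<^esub>"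
    using assms(4) unfolding weak_identities_def by blast
  have "\<exists>k < N. \<rho> (F_incl N k (s k)) = \<one>\<^bsub>G\<^esub>"
    if s: "s \<in> {..<N} \<rightarrow> S" and \<rho>: "\<rho> \<in> hom (F_power N) G" for s \<rho>
  proof -
    obtain k where "k < N" "f (\<rho> (F_incl N k (s k))) = \<one>\<^bsub>H\<^esub>"
      using weak s hom_compose[OF \<rho> assms(1)] by fastforce
    moreover have "\<rho> (F_incl N k (s k)) \<in> carrier G"
      using hom_in_carrier[OF \<rho> F_incl_in_carrier] s \<open>k < N\<close> assms(3) by blast
    ultimately show ?thesis using assms(2) by blast
  qed
  then show ?thesis
    using \<open>N \<ge> 1\<close> unfolding weak_identities_def by blast
qed

lemma weak_identities_FactGroup_one:
  assumes "group G" "S \<subseteq> carrier free_group_F" "weak_identities S (G Mod {\<one>\<^bsub>G\<^esub>})"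
  shows "weak_identities S G"
proof (rule weak_identities_reflect[OF _ _ assms(2,3)])
  have normal: "{\<one>\<^bsub>G\<^esub>} \<lhd> G" by (rule group.one_is_normal[OF assms(1)])
  show "(\<lambda>a. {\<one>\<^bsub>G\<^esub>} #>\<^bsub>G\<^esub> a) \<in> hom G (G Mod {\<one>\<^bsub>G\<^esub>})"
    by (rule normal.r_coset_hom_Mod[OF normal])
  fix a assume "a \<in> carrier G" "{\<one>\<^bsub>G\<^esub>} #>\<^bsub>G\<^esub> a = \<one>\<^bsub>G Mod {\<one>\<^bsub>G\<^esub>}\<^esub>"
  then show "a = \<one>\<^bsub>G\<^esub>"
    using group.rcos_self[OF assms(1) _ normal_imp_subgroup[OF normal]] by fastforce
qed

lemma weak_identities_mod_imp_identities:
  assumes "group G" "discriminating G" "H \<noteq> {}" "identities H G"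
    and "S \<subseteq> carrier free_group_F" "weak_identities_mod S H G"
  shows "identities S G"
proof -
  have "weak_identities S (G Mod {\<one>\<^bsub>G\<^esub>})"
    using assms(6) verbal_identities[OF assms(1,3,4)] by (simp add: weak_identities_mod_def)
  then show ?thesis
    using weak_identities_imp_identities[OF assms(1,2,5)]
      weak_identities_FactGroup_one[OF assms(1,5)] by blast
qed

lemma weak_star_identities_mod_imp_identities:
  assumes "group G" "discriminating G" "identities H G" "weak_star_identities_mod S H G"
  shows "identities S G"
proof -
  obtain m :: nat and Ss where T: "\<forall>j \<le> m. T_subgroup (Ss j)" and "Ss 0 = S" "Ss m = H"
    and weak: "\<forall>j \<in> {1..m}. weak_identities_mod (Ss (j - 1)) (Ss j) G"
    using assms(4) unfolding weak_star_identities_mod_def by blast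
  have sub: "subgroup (Ss j) free_group_F" if "j \<le> m" for j
    using T that unfolding T_subgroup_def by blast
  have "identities (Ss j) G" if "j \<le> m" for j
    using that
  proof (induction j rule: inc_induct)
    case base
    show ?case using \<open>Ss m = H\<close> assms(3) by simp
  next
    case (step j)
    have "weak_identities_mod (Ss j) (Ss (Suc j)) G"
      using weak[rule_format, of "Suc j"] step.hyps(2) by simp
    moreover have "Ss (Suc j) \<noteq> {}" "Ss j \<subseteq> carrier free_group_F"
      using sub[of "Suc j"] sub[of j] step.hyps(2) subgroup.one_closed subgroup.subset by fastforce+
    ultimately show ?case
      using weak_identities_mod_imp_identities[OF assms(1,2) _ step.IH] by blast
  qed
  then show ?thesis using \<open>Ss 0 = S\<close> by blast
qed

theorem corollary6p5:
  fixes G :: "('a, 'b) monoid_scheme" and S :: "fword set"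
  assumes "group G"
    and "discriminating G"
    and "T_subgroup S"
    and "weak_star_identities_mod S {\<one>\<^bsub>free_group_F\<^esub>} G"
  shows "\<forall>s \<in> S. \<forall>\<pi> \<in> hom free_group_F G. \<pi> s = \<one>\<^bsub>G\<^esub>"
proof -
  have one: "\<one>\<^bsub>free_group_F\<^esub> = []" by (simp add: free_group_F_def)
  have "\<pi> [] = \<one>\<^bsub>G\<^esub>" if "\<pi> \<in> hom free_group_F G" for \<pi>
    by (rule hom_idempotent_eq_one[OF assms(1) that])
      (simp_all add: free_group_F_def fw_reduce_def)
  then have "identities {\<one>\<^bsub>free_group_F\<^esub>} G"
    unfolding identities_def one by simp
  then show ?thesis
    using weak_star_identities_mod_imp_identities[OF assms(1,2) _ assms(4)]
    unfolding identities_def by blast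
qed

end
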